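(* Let $P^v_i$ ($i=1,\dots,n$, $v\in\mathbb{R}^n$) be the extremal polynomials of the free nilpotent Lie group of rank $r\ge2$ and step $s\ge2$ with respect to a Hall–Grayson–Grossman basis $X_1,\dots,X_n$. Then: (i) if $i,\ell\in\{1,\dots,n\}$ satisfy $i\prec\ell$ and $v_\ell\neq0$, then $P^v_i$ is not the zero polynomial; (ii) if $v\in\mathbb{R}^n$ is such that $P^v_i=0$ (as a polynomial) for all $i=1,\dots,r$, then $v=0$; (iii) for all $i=1,\dots,n$ and $v\in\mathbb{R}^n$, $P^v_i(0)=v_i$.
   Context: Multi-indices $\mathcal I=\mathbb{N}^n$ with $|\alpha|$, $\alpha!$, $x^\alpha$. Hall basis of the free nilpotent Lie algebra $\mathfrak g$ (rank $r$, step $s$, dimension $n$): start from a basis $X_1,\dots,X_r$ of the first layer (degree 1); inductively the degree-$d$ elements are brackets $[X_i,X_j]$ of earlier elements with $i>j$, $d(i)+d(j)=d$, and, if $X_i$ was constructed as $[X_h,X_k]$, then $k\le j$; list them after lower-degree elements. Strings: $(\ell)$ for $\ell\le r$; for $X_\ell=[X_a,X_b]$, the string of $a$ followed by $b$. With string $(\ell_0,\dots,\ell_h)$, $I(\ell)_j=\#\{1\le p\le h:\ell_p=j\}$; $j\prec\ell$ iff the string of $j$ is an initial segment of that of $\ell$. $[Y,X_\alpha]$ is the left-nested bracket of $Y$ with $X_1$ ($\alpha_1$ times), ..., $X_n$ ($\alpha_n$ times), $[Y,X_0]=Y$. Realization on $\mathbb{R}^n$: $X_i=\sum_{\ell:\,i\prec\ell}\frac{(-1)^{|I(\ell)|}}{I(\ell)!}x^{I(\ell)}\partial_{x_\ell}$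 ($i\le r$), and $X_\ell=[X_a,X_b]$ for $\ell>r$ constructed as $[X_a,X_b]$; these form a Lie algebra of vector fields isomorphic to $\mathfrak g$. Generalized structure constants $c^k_{i\alpha}$: $[X_i,X_\alpha]=\sum_kc^k_{i\alpha}X_k$. Extremal polynomials: $P^v_i(x)=\sum_{\alpha\in\mathcal I}\frac{(-1)^{|\alpha|}}{\alpha!}\big(\sum_kc^k_{i\alpha}v_k\big)x^\alpha$. *)

theory Defs
  imports "HOL-Analysis.Analysis"
begin

text \<open>A Hall basis X_1..X_n is described by the indices 1..r (first layer) and,
for r < l \<le> n, the pair br l = (a,b) meaning X_l = [X_a, X_b].\<close>

type_synonym hall = "nat \<Rightarrow> nat \<times> nat"

text \<open>Strings (recursion with fuel; called with fuel l, which suffices since a < l).\<close>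
fun hstr :: "nat \<Rightarrow> hall \<Rightarrow> nat \<Rightarrow> nat \<Rightarrow> nat list" where
  "hstr r br 0 l = [l]"
| "hstr r br (Suc k) l =
     (if l \<le> r then [l] else hstr r br k (fst (br l)) @ [snd (br l)])"

definition hstring :: "nat \<Rightarrow> hall \<Rightarrow> nat \<Rightarrow> nat list" where
  "hstring r br l = hstr r br l l"

fun hdg :: "nat \<Rightarrow> hall \<Rightarrow> nat \<Rightarrow> nat \<Rightarrow> nat" where
  "hdg r br 0 l = 1"
| "hdg r br (Suc k) l =
     (if l \<le> r then 1 else hdg r br k (fst (br l)) + hdg r br k (snd (br l)))"

definition hdeg :: "nat \<Rightarrow> hall \<Rightarrow> nat \<Rightarrow> nat" where
  "hdeg r br l = hdg r br l l"

definition hall_basis :: "nat \<Rightarrow> nat \<Rightarrow> nat \<Rightarrow> hall \<Rightarrow> bool" where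
  "hall_basis r s n br \<longleftrightarrow>
     r \<le> n \<and>
     (\<forall>l\<in>{r<..n}. 1 \<le> snd (br l) \<and> snd (br l) < fst (br l) \<and> fst (br l) < l \<and>
        (r < fst (br l) \<longrightarrow> snd (br (fst (br l))) \<le> snd (br l))) \<and>
     (\<forall>l\<in>{1..n}. hdeg r br l \<le> s) \<and>
     (\<forall>l\<in>{1..n}. \<forall>l'\<in>{1..n}. l \<le> l' \<longrightarrow> hdeg r br l \<le> hdeg r br l') \<and>
     inj_on br {r<..n} \<and>
     (\<forall>a\<in>{1..n}. \<forall>b\<in>{1..n}.
        b < a \<and> hdeg r br a + hdeg r br b \<le> s \<and> (r < a \<longrightarrow> snd (br a) \<le> b)
        \<longrightarrow> (\<exists>l\<in>{r<..n}. br l = (a, b)))"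

definition hprec :: "nat \<Rightarrow> hall \<Rightarrow> nat \<Rightarrow> nat \<Rightarrow> bool" where
  "hprec r br j l \<longleftrightarrow> (\<exists>zs. hstring r br l = hstring r br j @ zs)"

text \<open>I(l)_j = number of occurrences of j among l_1..l_h.\<close>
definition hI :: "nat \<Rightarrow> hall \<Rightarrow> nat \<Rightarrow> nat \<Rightarrow> nat" where
  "hI r br l j = count_list (tl (hstring r br l)) j"

text \<open>Vector fields on R^n: component l, evaluated at a point x (coordinates x 1..x n).\<close>
type_synonym vf = "nat \<Rightarrow> (nat \<Rightarrow> real) \<Rightarrow> real"

definition pd :: "nat \<Rightarrow> ((nat \<Rightarrow> real) \<Rightarrow> real) \<Rightarrow> (nat \<Rightarrow> real) \<Rightarrow> real" where
  "pd j f x = deriv (\<lambda>t. f (x(j := t))) (x j)"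

text \<open>[X,Y] = XY - YX as derivations.\<close>
definition vf_bracket :: "nat \<Rightarrow> vf \<Rightarrow> vf \<Rightarrow> vf" where
  "vf_bracket n X Y = (\<lambda>l x. \<Sum>j=1..n. X j x * pd j (Y l) x - Y j x * pd j (X l) x)"

definition gen_vf :: "nat \<Rightarrow> nat \<Rightarrow> hall \<Rightarrow> nat \<Rightarrow> vf" where
  "gen_vf n r br i = (\<lambda>l x.
     if l \<in> {1..n} \<and> hprec r br i l
     then (-1) ^ (\<Sum>j=1..n. hI r br l j) / (\<Prod>j=1..n. fact (hI r br l j))
          * (\<Prod>j=1..n. x j ^ hI r br l j)
     else 0)"

fun hvf_aux :: "nat \<Rightarrow> nat \<Rightarrow> hall \<Rightarrow> nat \<Rightarrow> nat \<Rightarrow> vf" where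
  "hvf_aux n r br 0 l = gen_vf n r br l"
| "hvf_aux n r br (Suc k) l =
     (if l \<le> r then gen_vf n r br l
      else vf_bracket n (hvf_aux n r br k (fst (br l))) (hvf_aux n r br k (snd (br l))))"

definition hvf :: "nat \<Rightarrow> nat \<Rightarrow> hall \<Rightarrow> nat \<Rightarrow> vf" where
  "hvf n r br l = hvf_aux n r br l l"

text \<open>[X_i, X_alpha]: left-nested bracket with X_1 (alpha 1 times), ..., X_n (alpha n times).\<close>
definition nested :: "nat \<Rightarrow> nat \<Rightarrow> hall \<Rightarrow> nat \<Rightarrow> (nat \<Rightarrow> nat) \<Rightarrow> vf" where
  "nested n r br i \<alpha> =
     fold (\<lambda>j Y. ((\<lambda>Z. vf_bracket n Z (hvf n r br j)) ^^ \<alpha> j) Y) [1..<n+1] (hvf n r br i)"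

definition multi_idx :: "nat \<Rightarrow> (nat \<Rightarrow> nat) set" where
  "multi_idx n = {\<alpha>. \<forall>j. j \<notin> {1..n} \<longrightarrow> \<alpha> j = 0}"

definition sconst :: "nat \<Rightarrow> nat \<Rightarrow> hall \<Rightarrow> nat \<Rightarrow> (nat \<Rightarrow> nat) \<Rightarrow> nat \<Rightarrow> real" where
  "sconst n r br i \<alpha> = (THE c. (\<forall>k. k \<notin> {1..n} \<longrightarrow> c k = 0) \<and>
      (\<forall>l\<in>{1..n}. \<forall>x. nested n r br i \<alpha> l x = (\<Sum>k=1..n. c k * hvf n r br k l x)))"

text \<open>Extremal polynomial P^v_i, represented by its coefficient family over multi-indices.\<close>
definition ext_poly :: "nat \<Rightarrow> nat \<Rightarrow> hall \<Rightarrow> nat \<Rightarrow> (nat \<Rightarrow> real) \<Rightarrow> (nat \<Rightarrow> nat) \<Rightarrow> real" where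
  "ext_poly n r br i v = (\<lambda>\<alpha>. if \<alpha> \<in> multi_idx n
      then (-1) ^ (\<Sum>j=1..n. \<alpha> j) / (\<Prod>j=1..n. fact (\<alpha> j))
           * (\<Sum>k=1..n. sconst n r br i \<alpha> k * v k)
      else 0)"

definition poly_eval :: "nat \<Rightarrow> ((nat \<Rightarrow> nat) \<Rightarrow> real) \<Rightarrow> (nat \<Rightarrow> real) \<Rightarrow> real" where
  "poly_eval n p x = infsum (\<lambda>\<alpha>. p \<alpha> * (\<Prod>j=1..n. x j ^ \<alpha> j)) (multi_idx n)"

end

theory Submission
  imports Defs
begin

text \<open>The realization X_k of a Hall basis element is explicit on a coordinate slice: if
X_k = [X_a, X_b] (put b = 1 for generators) and x_1 = ... = x_(b-1) = 0, then the l-th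
component of X_k is (-1)^|J| / J! x^J when the string of k is an initial segment of the string
of l, J counting the remaining letters, and 0 otherwise. This follows by induction along the
basis: on the slice every term of the bracket vanishes except -d/dx_b of the l-th component of
X_a, and differentiating in x_b strips exactly the letter b that follows the string of a.
In particular X_k(0) = e_k, so structure constants can be read off at the origin. The letters
following the string of i in the string of l are sorted, so the nested bracket [X_i, X_alpha]
with alpha counting them is X_l itself. Hence the coefficient of x^alpha in P^v_i is
(-1)^|alpha| / alpha! v_l, which gives (i); (ii) follows because every string starts with a
generator, and (iii) is the case alpha = 0.\<close>

definition monomial :: "nat \<Rightarrow> (nat \<Rightarrow> nat) \<Rightarrow> (nat \<Rightarrow> real) \<Rightarrow> real" where
  "monomial n J x = (\<Prod>j=1..n. x j ^ J j)"

definition signed_inv_fact :: "nat \<Rightarrow> (nat \<Rightarrow> nat) \<Rightarrow> real" where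
  "signed_inv_fact n J = (-1) ^ (\<Sum>j=1..n. J j) / (\<Prod>j=1..n. fact (J j))"

lemma signed_inv_fact_nonzero: "signed_inv_fact n J \<noteq> 0"
  unfolding signed_inv_fact_def by simp

lemma signed_inv_fact_Suc:
  assumes "b \<in> {1..n}"
  shows "of_nat (Suc (J b)) * signed_inv_fact n (J(b := Suc (J b))) = - signed_inv_fact n J"
proof -
  let ?J' = "J(b := Suc (J b))"
  have "(\<Sum>j\<in>{1..n}-{b}. ?J' j) = (\<Sum>j\<in>{1..n}-{b}. J j)"
    by (rule sum.cong) auto
  then have sum: "(\<Sum>j=1..n. ?J' j) = Suc (\<Sum>j=1..n. J j)"
    using assms by (simp add: sum.remove)
  have "(\<Prod>j\<in>{1..n}-{b}. fact (?J' j) :: real) = (\<Prod>j\<in>{1..n}-{b}. fact (J j))"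
    by (rule prod.cong) auto
  then have prod: "(\<Prod>j=1..n. fact (?J' j)) = of_nat (Suc (J b)) * (\<Prod>j=1..n. (fact (J j) :: real))"
    using assms by (simp add: prod.remove fact_Suc)
  show ?thesis
    unfolding signed_inv_fact_def sum prod by (simp del: of_nat_Suc)
qed

lemma monomial_eq_0:
  assumes "p \<in> {1..n}" "x p = 0" "0 < J p"
  shows "monomial n J x = 0"
  unfolding monomial_def using assms by (auto intro!: bexI[of _ p])

lemma monomial_at_update:
  assumes "j \<in> {1..n}"
  shows "monomial n J (x(j := t)) = t ^ J j * (\<Prod>i\<in>{1..n}-{j}. x i ^ J i)"
proof -
  have "(\<Prod>i\<in>{1..n}-{j}. (x(j := t)) i ^ J i) = (\<Prod>i\<in>{1..n}-{j}. x i ^ J i)"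
    by (rule prod.cong) auto
  then show ?thesis
    unfolding monomial_def using assms by (simp add: prod.remove)
qed

lemma pd_monomial:
  assumes "j \<in> {1..n}"
  shows "pd j (\<lambda>x. c * monomial n J x) x = c * of_nat (J j) * monomial n (J(j := J j - 1)) x"
proof -
  let ?K = "\<Prod>i\<in>{1..n}-{j}. x i ^ J i"
  have "((\<lambda>t. c * (t ^ J j * ?K)) has_field_derivative c * (of_nat (J j) * x j ^ (J j - 1) * ?K)) (at (x j))"
    by (auto intro!: derivative_eq_intros)
  then have "pd j (\<lambda>x. c * monomial n J x) x = c * (of_nat (J j) * x j ^ (J j - 1) * ?K)"
    unfolding pd_def monomial_at_update[OF assms] by (rule DERIV_imp_deriv)
  moreover have "(\<Prod>i\<in>{1..n}-{j}. x i ^ (J(j := J j - 1)) i) = ?K"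
    by (rule prod.cong) auto
  then have "x j ^ (J j - 1) * ?K = monomial n (J(j := J j - 1)) x"
    using monomial_at_update[OF assms, of "J(j := J j - 1)" x "x j"] by simp
  ultimately show ?thesis by simp
qed

lemma poly_eval_at_0: "poly_eval n p (\<lambda>_. 0) = p (\<lambda>_. 0)"
proof -
  have "poly_eval n p (\<lambda>_. 0) = (\<Sum>\<^sub>\<infinity>\<alpha>\<in>{\<lambda>_. 0}. p \<alpha> * monomial n \<alpha> (\<lambda>_. 0))"
    unfolding poly_eval_def monomial_def[symmetric]
  proof (rule infsum_cong_neutral)
    fix \<alpha> assume "\<alpha> \<in> multi_idx n - {\<lambda>_. 0}"
    then obtain q where "q \<in> {1..n}" "\<alpha> q \<noteq> 0"
      unfolding multi_idx_def by fastforce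
    then show "p \<alpha> * monomial n \<alpha> (\<lambda>_. 0) = 0"
      using monomial_eq_0 by auto
  qed (auto simp: multi_idx_def)
  then show ?thesis
    by (simp add: monomial_def)
qed

lemma sorted_eq_replicate_append_filter:
  "sorted zs \<Longrightarrow> \<forall>z\<in>set zs. k \<le> z \<Longrightarrow>
   zs = replicate (count_list zs k) k @ filter (\<lambda>z. z \<noteq> k) zs"
proof (induction zs)
  case (Cons z zs)
  show ?case
  proof (cases "z = k")
    case False
    with Cons.prems have "\<forall>y\<in>set (z # zs). k < y" by auto
    then have "k \<notin> set (z # zs)" "filter (\<lambda>y. y \<noteq> k) (z # zs) = z # zs"
      by (auto simp: filter_id_conv)
    then show ?thesis by (metis count_notin replicate_0 append_Nil)
  qed (use Cons in simp)
qed simp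

lemma fold_funpow_count_list:
  assumes "sorted zs" "set zs \<subseteq> set ks" "sorted_wrt (<) ks"
  shows "fold (\<lambda>j. g j ^^ count_list zs j) ks = fold g zs"
  using assms
proof (induction ks arbitrary: zs)
  case Nil
  then show ?case by simp
next
  case (Cons k ks)
  define zs' where "zs' = filter (\<lambda>z. z \<noteq> k) zs"
  have zs_split: "zs = replicate (count_list zs k) k @ zs'"
    unfolding zs'_def using Cons.prems
    by (intro sorted_eq_replicate_append_filter) (auto simp: less_imp_le)
  have "set zs' \<subseteq> set ks" "sorted zs'"
    unfolding zs'_def using Cons.prems by (auto simp: sorted_wrt_filter)
  then have IH: "fold (\<lambda>j. g j ^^ count_list zs' j) ks = fold g zs'"
    using Cons by simp
  have "count_list zs' j = count_list zs j" if "j \<noteq> k" for j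
    unfolding zs'_def using that by (induction zs) auto
  then have "fold (\<lambda>j. g j ^^ count_list zs j) ks = fold (\<lambda>j. g j ^^ count_list zs' j) ks"
    using Cons.prems(3) by (intro ext fold_cong refl) auto
  moreover have "fold g (replicate (count_list zs k) k @ zs') = fold g zs' \<circ> g k ^^ count_list zs k"
    by simp
  ultimately show ?case
    using zs_split IH by simp
qed

lemma sum_of_bool_mult:
  fixes m n :: nat
  assumes "m \<in> {1..n}"
  shows "(\<Sum>k=1..n. of_bool (k = m) * f k) = (f m :: real)"
proof -
  have "(\<Sum>k=1..n. of_bool (k = m) * f k) = (\<Sum>k=1..n. if k = m then f k else 0)"
    by (rule sum.cong) auto
  also have "\<dots> = f m"
    using assms by (subst sum.delta) auto
  finally show ?thesis .
qed

abbreviation vanishes_below :: "nat \<Rightarrow> (nat \<Rightarrow> real) \<Rightarrow> bool" where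
  "vanishes_below b x \<equiv> \<forall>i. 1 \<le> i \<and> i < b \<longrightarrow> x i = 0"

lemma vf_bracket_cong_slice:
  assumes "\<And>l y. vanishes_below b y \<Longrightarrow> X l y = X' l y"
    and "\<And>l y. vanishes_below b y \<Longrightarrow> Y l y = Y' l y"
    and "\<And>j. j < b \<Longrightarrow> X' j x = 0" "\<And>j. j < b \<Longrightarrow> Y' j x = 0"
    and x: "vanishes_below b x"
  shows "vf_bracket n X Y l x = vf_bracket n X' Y' l x"
  unfolding vf_bracket_def
proof (rule sum.cong[OF refl])
  fix j assume "j \<in> {1..n}"
  show "X j x * pd j (Y l) x - Y j x * pd j (X l) x = X' j x * pd j (Y' l) x - Y' j x * pd j (X' l) x"
  proof (cases "j < b")
    case True
    then show ?thesis
      using assms x by simp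
  next
    case False
    then have "vanishes_below b (x(j := t))" for t
      using x by simp
    then have "pd j (Y l) x = pd j (Y' l) x" "pd j (X l) x = pd j (X' l) x"
      unfolding pd_def using assms(1,2) by simp_all
    then show ?thesis
      using assms(1,2) x by simp
  qed
qed

locale Hall_Basis =
  fixes r s n :: nat and br :: hall
  assumes hall_basis: "hall_basis r s n br"
begin

abbreviation str :: "nat \<Rightarrow> nat list" where "str \<equiv> hstring r br"

lemma r_le_n: "r \<le> n"
  using hall_basis unfolding hall_basis_def by auto

lemma br_bounds:
  assumes "r < l" "l \<le> n"
  shows "1 \<le> snd (br l)" "snd (br l) < fst (br l)" "fst (br l) < l"
    and "r < fst (br l) \<Longrightarrow> snd (br (fst (br l))) \<le> snd (br l)"
  using hall_basis assms unfolding hall_basis_def by auto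

lemma inj_on_br: "inj_on br {r<..n}"
  using hall_basis unfolding hall_basis_def by auto

lemma hstr_le_r: "l \<le> r \<Longrightarrow> hstr r br k l = [l]"
  by (cases k) auto

lemma hstr_fuel: "l \<le> n \<Longrightarrow> l \<le> k \<Longrightarrow> hstr r br k l = hstr r br l l"
proof (induction l arbitrary: k rule: less_induct)
  case (less l)
  show ?case
  proof (cases "l \<le> r")
    case False
    then obtain k' l' where "k = Suc k'" "l = Suc l'"
      using less.prems False by (cases k; cases l) auto
    moreover have "fst (br l) < l"
      using br_bounds False less.prems by auto
    ultimately show ?thesis
      using False less.IH[of "fst (br l)" k'] less.IH[of "fst (br l)" l'] less.prems by simp
  qed (simp add: hstr_le_r)
qed

lemma str_le_r: "l \<le> r \<Longrightarrow> str l = [l]"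
  unfolding hstring_def by (simp add: hstr_le_r)

lemma str_bracket:
  assumes "r < l" "l \<le> n"
  shows "str l = str (fst (br l)) @ [snd (br l)]"
proof -
  obtain l' where "l = Suc l'"
    using assms by (cases l) auto
  moreover have "fst (br l) < l"
    using br_bounds assms by auto
  ultimately show ?thesis
    using assms hstr_fuel[of "fst (br l)" l'] unfolding hstring_def by simp
qed

lemma str_nonempty: "str l \<noteq> []"
proof -
  have "hstr r br k l \<noteq> []" for k
    by (induction k arbitrary: l) auto
  then show ?thesis unfolding hstring_def by blast
qed

lemma length_str_eq_1_iff: "l \<le> n \<Longrightarrow> length (str l) = 1 \<longleftrightarrow> l \<le> r"
  using str_le_r str_bracket[of l] str_nonempty[of "fst (br l)"] by (cases "l \<le> r") auto

lemma str_subset: "l \<in> {1..n} \<Longrightarrow> set (str l) \<subseteq> {1..n}"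
proof (induction l rule: less_induct)
  case (less l)
  show ?case
  proof (cases "l \<le> r")
    case False
    then have "fst (br l) \<in> {1..n}" "snd (br l) \<in> {1..n}" "fst (br l) < l"
      using br_bounds[of l] less.prems by auto
    then show ?thesis
      using str_bracket[of l] False less.prems less.IH[of "fst (br l)"] by simp
  qed (use less.prems str_le_r in simp)
qed

lemma hd_str: "l \<in> {1..n} \<Longrightarrow> hd (str l) \<in> {1..r}"
proof (induction l rule: less_induct)
  case (less l)
  show ?case
  proof (cases "l \<le> r")
    case False
    then have "fst (br l) \<in> {1..n}" "fst (br l) < l"
      using br_bounds[of l] less.prems by auto
    then show ?thesis
      using str_bracket[of l] False less.prems less.IH[of "fst (br l)"] str_nonempty by simp
  qed (use less.prems str_le_r in simp)
qed

lemma str_inj: "l \<in> {1..n} \<Longrightarrow> l' \<in> {1..n} \<Longrightarrow> str l = str l' \<Longrightarrow> l = l'"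
proof (induction l arbitrary: l' rule: less_induct)
  case (less l)
  have "l \<le> r \<longleftrightarrow> l' \<le> r"
    using length_str_eq_1_iff less.prems by (metis atLeastAtMost_iff)
  show ?case
  proof (cases "l \<le> r")
    case True
    with \<open>l \<le> r \<longleftrightarrow> l' \<le> r\<close> show ?thesis
      using less.prems str_le_r by simp
  next
    case False
    with \<open>l \<le> r \<longleftrightarrow> l' \<le> r\<close> have "r < l" "r < l'" by auto
    then have "str (fst (br l)) = str (fst (br l'))" "snd (br l) = snd (br l')"
      using less.prems str_bracket[of l] str_bracket[of l'] by auto
    moreover have "fst (br l) \<in> {1..n}" "fst (br l') \<in> {1..n}" "fst (br l) < l"
      using br_bounds[of l] br_bounds[of l'] less.prems \<open>r < l\<close> \<open>r < l'\<close> by auto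
    ultimately have "br l = br l'"
      using less.IH by (simp add: prod_eq_iff)
    then show ?thesis
      using inj_on_br \<open>r < l\<close> \<open>r < l'\<close> less.prems unfolding inj_on_def by auto
  qed
qed

lemma str_eq_snoc:
  assumes "l \<in> {1..n}" "str l = ys @ [z]" "ys \<noteq> []"
  shows "r < l" "str (fst (br l)) = ys" "snd (br l) = z"
proof -
  have "length (str l) \<noteq> 1"
    using assms(2,3) by simp
  then show "r < l"
    using length_str_eq_1_iff assms(1) by auto
  then show "str (fst (br l)) = ys" "snd (br l) = z"
    using str_bracket[of l] assms by auto
qed

lemma sorted_tl_str:
  "l \<in> {1..n} \<Longrightarrow> sorted (tl (str l)) \<and> (r < l \<longrightarrow> (\<forall>z\<in>set (tl (str l)). z \<le> snd (br l)))"
proof (induction l rule: less_induct)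
  case (less l)
  show ?case
  proof (cases "l \<le> r")
    case False
    define a b where "a = fst (br l)" and "b = snd (br l)"
    have ab: "a \<in> {1..n}" "a < l" "b < a"
      using br_bounds[of l] less.prems False unfolding a_def b_def by auto
    have IH: "sorted (tl (str a))" "r < a \<longrightarrow> (\<forall>z\<in>set (tl (str a)). z \<le> snd (br a))"
      using less.IH[OF ab(2,1)] by auto
    have "\<forall>z\<in>set (tl (str a)). z \<le> b"
    proof (cases "a \<le> r")
      case False
      then have "snd (br a) \<le> b"
        using br_bounds(4)[of l] less.prems \<open>\<not> l \<le> r\<close> unfolding a_def b_def by auto
      then show ?thesis
        using IH(2) False by auto
    qed (simp add: str_le_r)
    moreover have "tl (str l) = tl (str a) @ [b]"
      using str_bracket[of l] False less.prems str_nonempty[of a] unfolding a_def b_def by simp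
    ultimately show ?thesis
      using IH(1) by (auto simp: sorted_append b_def)
  qed (simp add: str_le_r)
qed

lemma sorted_str_suffix:
  assumes "l \<in> {1..n}" "str l = str i @ zs"
  shows "sorted zs"
proof -
  have "zs = drop (length (str i) - 1) (tl (str l))"
    using assms(2) str_nonempty[of i] by (cases "str i") auto
  then show ?thesis
    using sorted_tl_str[OF assms(1)] by (simp add: sorted_wrt_drop)
qed

lemma prefix_le:
  assumes "i \<in> {1..n}" "l \<in> {1..n}" "str l = str i @ zs"
  shows "i \<le> l"
  using assms(2,3)
proof (induction zs arbitrary: l rule: rev_induct)
  case Nil
  then show ?case using str_inj[of l i] assms(1) by simp
next
  case (snoc z zs)
  then have "r < l" "str (fst (br l)) = str i @ zs"
    using str_eq_snoc[of l "str i @ zs" z] str_nonempty[of i] by auto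
  moreover have "fst (br l) \<in> {1..n}" "fst (br l) < l"
    using br_bounds[of l] \<open>r < l\<close> snoc.prems by auto
  ultimately show ?case
    using snoc.IH by fastforce
qed

lemma prefix_next_letter:
  assumes "i \<in> {1..n}" "l \<in> {1..n}" "str l = str i @ z # zs"
  shows "1 \<le> z \<and> z < i"
  using assms(2,3)
proof (induction zs arbitrary: l rule: rev_induct)
  case Nil
  then have "r < l" "str (fst (br l)) = str i" "snd (br l) = z"
    using str_eq_snoc[of l "str i" z] str_nonempty[of i] by auto
  moreover have "fst (br l) \<in> {1..n}"
    using br_bounds[of l] \<open>r < l\<close> Nil.prems by auto
  ultimately have "fst (br l) = i"
    using str_inj assms(1) by blast
  then show ?case
    using br_bounds[of l] \<open>r < l\<close> \<open>snd (br l) = z\<close> Nil.prems by auto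
next
  case (snoc y zs)
  then have "r < l" "str (fst (br l)) = str i @ z # zs"
    using str_eq_snoc[of l "str i @ z # zs" y] by auto
  moreover have "fst (br l) \<in> {1..n}"
    using br_bounds[of l] \<open>r < l\<close> snoc.prems by auto
  ultimately show ?case
    using snoc.IH by blast
qed

abbreviation X :: "nat \<Rightarrow> vf" where "X \<equiv> hvf n r br"

lemma hvf_aux_le_r: "l \<le> r \<Longrightarrow> hvf_aux n r br k l = gen_vf n r br l"
  by (cases k) auto

lemma hvf_aux_fuel: "l \<le> n \<Longrightarrow> l \<le> k \<Longrightarrow> hvf_aux n r br k l = hvf_aux n r br l l"
proof (induction l arbitrary: k rule: less_induct)
  case (less l)
  show ?case
  proof (cases "l \<le> r")
    case False
    obtain k' where k: "k = Suc k'"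
      using less.prems False by (cases k) auto
    obtain l' where l: "l = Suc l'"
      using False by (cases l) auto
    have lt: "fst (br l) < l" "snd (br l) < l"
      using br_bounds[of l] False less.prems by auto
    have "hvf_aux n r br k' c = hvf_aux n r br l' c" if "c < l" for c
      using less.IH[of c k'] less.IH[of c l'] that less.prems k l by simp
    then have "hvf_aux n r br k' (fst (br l)) = hvf_aux n r br l' (fst (br l))"
      "hvf_aux n r br k' (snd (br l)) = hvf_aux n r br l' (snd (br l))"
      using lt by blast+
    moreover have "hvf_aux n r br k l
        = vf_bracket n (hvf_aux n r br k' (fst (br l))) (hvf_aux n r br k' (snd (br l)))"
      "hvf_aux n r br l l
        = vf_bracket n (hvf_aux n r br l' (fst (br l))) (hvf_aux n r br l' (snd (br l)))"
      using False k l by simp_all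
    ultimately show ?thesis by simp
  qed (simp add: hvf_aux_le_r)
qed

lemma hvf_le_r: "l \<le> r \<Longrightarrow> X l = gen_vf n r br l"
  unfolding hvf_def by (simp add: hvf_aux_le_r)

lemma hvf_bracket:
  assumes "r < l" "l \<le> n"
  shows "X l = vf_bracket n (X (fst (br l))) (X (snd (br l)))"
proof -
  obtain l' where l: "l = Suc l'"
    using assms by (cases l) auto
  have "fst (br l) < l" "snd (br l) < l"
    using br_bounds[OF assms] by auto
  then have "hvf_aux n r br l' (fst (br l)) = X (fst (br l))"
    "hvf_aux n r br l' (snd (br l)) = X (snd (br l))"
    unfolding hvf_def using hvf_aux_fuel[of _ l'] assms l by auto
  then show ?thesis
    using assms l unfolding hvf_def by simp
qed

definition suffix_count :: "nat \<Rightarrow> nat \<Rightarrow> nat \<Rightarrow> nat" where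
  "suffix_count k l = count_list (drop (length (str k)) (str l))"

text \<open>The formula by which gen_vf defines X_i for i \<le> r, with the string of i replaced by
that of an arbitrary k.\<close>

definition prefix_vf :: "nat \<Rightarrow> vf" where
  "prefix_vf k = (\<lambda>l x. if l \<in> {1..n} \<and> hprec r br k l
      then signed_inv_fact n (suffix_count k l) * monomial n (suffix_count k l) x else 0)"

lemma gen_vf_eq_prefix_vf: "i \<le> r \<Longrightarrow> gen_vf n r br i = prefix_vf i"
proof -
  assume "i \<le> r"
  then have "suffix_count i l = hI r br l" for l
    by (simp add: suffix_count_def hI_def str_le_r drop_Suc fun_eq_iff)
  then show ?thesis
    unfolding gen_vf_def prefix_vf_def signed_inv_fact_def monomial_def by (intro ext) simp
qed

lemma prefix_vf_eq:
  assumes "l \<in> {1..n}" "str l = str k @ zs"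
  shows "prefix_vf k l = (\<lambda>x. signed_inv_fact n (count_list zs) * monomial n (count_list zs) x)"
proof -
  have "hprec r br k l" "suffix_count k l = count_list zs"
    using assms(2) unfolding hprec_def suffix_count_def by auto
  then show ?thesis
    using assms(1) unfolding prefix_vf_def by simp
qed

lemma prefix_vf_eq_0:
  assumes "\<not> (l \<in> {1..n} \<and> hprec r br k l)"
  shows "prefix_vf k l = (\<lambda>_. 0)"
  using assms unfolding prefix_vf_def by auto

lemma pd_prefix_vf:
  assumes "j \<in> {1..n}" "l \<in> {1..n}" "str l = str k @ zs"
  shows "pd j (prefix_vf k l) x = signed_inv_fact n (count_list zs) * of_nat (count_list zs j)
      * monomial n ((count_list zs)(j := count_list zs j - 1)) x"
  unfolding prefix_vf_eq[OF assms(2,3)] using pd_monomial[OF assms(1)] .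

lemma pd_prefix_vf_eq_0:
  assumes "\<not> (l \<in> {1..n} \<and> hprec r br k l)"
  shows "pd j (prefix_vf k l) x = 0"
  unfolding prefix_vf_eq_0[OF assms] pd_def by simp

lemma prefix_vf_below:
  assumes "k \<in> {1..n}" "j < k"
  shows "prefix_vf k j x = 0"
proof -
  have "\<not> (j \<in> {1..n} \<and> hprec r br k j)"
    using prefix_le[OF assms(1)] assms(2) unfolding hprec_def by fastforce
  then show ?thesis
    by (simp add: prefix_vf_eq_0)
qed

lemma prefix_vf_diag: "k \<in> {1..n} \<Longrightarrow> prefix_vf k k x = 1"
  using prefix_vf_eq[of k k "[]"] by (simp add: signed_inv_fact_def monomial_def)

lemma pd_prefix_vf_eq_0_if_low_letter:
  assumes "j \<in> {1..n}" "l \<in> {1..n}" "str l = str k @ zs"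
    and "z \<in> set zs" "z < b" "z \<noteq> j" "vanishes_below b x"
  shows "pd j (prefix_vf k l) x = 0"
proof -
  have "z \<in> {1..n}"
    using str_subset[OF assms(2)] assms(3,4) by auto
  moreover have "0 < ((count_list zs)(j := count_list zs j - 1)) z"
    using assms(4,6) count_list_0_iff[of zs z] by simp
  ultimately have "monomial n ((count_list zs)(j := count_list zs j - 1)) x = 0"
    using assms(5,7) by (intro monomial_eq_0) auto
  then show ?thesis
    using pd_prefix_vf[OF assms(1-3)] by simp
qed

lemma prefix_vf_off_diag:
  assumes "k \<in> {1..n}" "j \<noteq> k" "vanishes_below k x"
  shows "prefix_vf k j x = 0"
proof (cases "j \<in> {1..n} \<and> hprec r br k j")
  case True
  then obtain zs where j: "j \<in> {1..n}" "str j = str k @ zs"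
    unfolding hprec_def by blast
  have "zs \<noteq> []"
    using str_inj[of j k] j assms(1,2) by auto
  then obtain z zs' where zs: "zs = z # zs'"
    by (cases zs) auto
  then have "1 \<le> z" "z < k"
    using prefix_next_letter[OF assms(1)] j by auto
  moreover have "0 < count_list zs z"
    using zs by simp
  ultimately have "monomial n (count_list zs) x = 0"
    using assms(3) \<open>j \<in> {1..n}\<close> assms(1) by (intro monomial_eq_0[of z]) auto
  then show ?thesis
    using prefix_vf_eq[OF j] by simp
qed (simp add: prefix_vf_eq_0)

lemma pd_prefix_vf_above:
  assumes "k \<in> {1..n}" "j \<in> {1..n}" "k < j" "vanishes_below k x"
  shows "pd j (prefix_vf k l) x = 0"
proof (cases "l \<in> {1..n} \<and> hprec r br k l")
  case True
  then obtain zs where l: "l \<in> {1..n}" "str l = str k @ zs"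
    unfolding hprec_def by blast
  show ?thesis
  proof (cases zs)
    case Nil
    then show ?thesis
      using pd_prefix_vf[OF assms(2) l] by simp
  next
    case (Cons z zs')
    then have "z < k"
      using prefix_next_letter[OF assms(1)] l by auto
    then show ?thesis
      using pd_prefix_vf_eq_0_if_low_letter[OF assms(2) l, of z k] assms Cons by simp
  qed
qed (simp add: pd_prefix_vf_eq_0)

lemma pd_prefix_vf_strip_letter:
  assumes "b \<in> {1..n}" "l \<in> {1..n}" "str l = str a @ b # Q"
  shows "pd b (prefix_vf a l) x = - signed_inv_fact n (count_list Q) * monomial n (count_list Q) x"
proof -
  have count: "count_list (b # Q) = (count_list Q)(b := Suc (count_list Q b))"
    by (simp add: fun_eq_iff)
  have "pd b (prefix_vf a l) x = of_nat (Suc (count_list Q b))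
      * signed_inv_fact n ((count_list Q)(b := Suc (count_list Q b))) * monomial n (count_list Q) x"
    using pd_prefix_vf[OF assms] unfolding count by simp
  also have "\<dots> = - signed_inv_fact n (count_list Q) * monomial n (count_list Q) x"
    unfolding signed_inv_fact_Suc[OF assms(1)] by simp
  finally show ?thesis .
qed

lemma pd_prefix_vf_bracket:
  assumes "r < k" "k \<le> n" "vanishes_below (snd (br k)) x"
  shows "- pd (snd (br k)) (prefix_vf (fst (br k)) l) x = prefix_vf k l x"
proof -
  obtain a b where br: "br k = (a, b)"
    by fastforce
  have ab: "a \<in> {1..n}" "b \<in> {1..n}" "b < a"
    using br_bounds[OF assms(1,2)] br assms(2) by auto
  have str_k: "str k = str a @ [b]"
    using str_bracket[OF assms(1,2)] br by simp
  have x: "vanishes_below b x"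
    using assms(3) br by simp
  have "- pd b (prefix_vf a l) x = prefix_vf k l x"
  proof (cases "l \<in> {1..n} \<and> hprec r br a l")
    case False
    then have "\<not> (l \<in> {1..n} \<and> hprec r br k l)"
      using str_k unfolding hprec_def by auto
    then have "prefix_vf k l x = 0"
      by (simp add: prefix_vf_eq_0)
    then show ?thesis
      using pd_prefix_vf_eq_0[OF False] by simp
  next
    case True
    then obtain R where l: "l \<in> {1..n}" "str l = str a @ R"
      unfolding hprec_def by blast
    show ?thesis
    proof (cases "\<exists>Q. R = b # Q")
      case True
      then obtain Q where "R = b # Q"
        by blast
      then show ?thesis
        using pd_prefix_vf_strip_letter[OF ab(2) l(1)] prefix_vf_eq[of l k Q] l str_k by simp
    next
      case False
      then have "\<not> (l \<in> {1..n} \<and> hprec r br k l)"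
        using l str_k unfolding hprec_def by auto
      moreover have "pd b (prefix_vf a l) x = 0"
      proof (cases "b \<in> set R")
        case True
        \<comment> \<open>R is sorted and contains b without starting with it, so it starts below b\<close>
        with False obtain z Q where R: "R = z # Q" "z \<noteq> b" "b \<in> set Q"
          by (cases R) auto
        then have "z < b"
          using sorted_str_suffix[OF l] by fastforce
        then show ?thesis
          using pd_prefix_vf_eq_0_if_low_letter[OF ab(2) l, of z b] R x by simp
      qed (use pd_prefix_vf[OF ab(2) l] in simp)
      ultimately show ?thesis
        by (simp add: prefix_vf_eq_0)
    qed
  qed
  then show ?thesis
    using br by simp
qed

lemma vf_bracket_prefix_vf:
  assumes "r < k" "k \<le> n" "vanishes_below (snd (br k)) x"
  shows "vf_bracket n (prefix_vf (fst (br k))) (prefix_vf (snd (br k))) l x = prefix_vf k l x"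
proof -
  obtain a b where br: "br k = (a, b)"
    by fastforce
  have ab: "a \<in> {1..n}" "b \<in> {1..n}" "b < a"
    using br_bounds[OF assms(1,2)] br assms(2) by auto
  have x: "vanishes_below b x"
    using assms(3) br by simp
  have "prefix_vf a j x * pd j (prefix_vf b l) x - prefix_vf b j x * pd j (prefix_vf a l) x
      = (if j = b then - pd b (prefix_vf a l) x else 0)" if "j \<in> {1..n}" for j
  proof -
    have "prefix_vf a j x * pd j (prefix_vf b l) x = 0"
      using prefix_vf_below[OF ab(1)] pd_prefix_vf_above[OF ab(2) that _ x] ab(3)
      by (cases "j < a") auto
    then show ?thesis
      using prefix_vf_diag[OF ab(2)] prefix_vf_off_diag[OF ab(2) _ x] by (cases "j = b") simp_all
  qed
  then have "vf_bracket n (prefix_vf a) (prefix_vf b) l x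
      = (\<Sum>j=1..n. if j = b then - pd b (prefix_vf a l) x else 0)"
    unfolding vf_bracket_def by (rule sum.cong[OF refl])
  also have "\<dots> = - pd b (prefix_vf a l) x"
    using ab(2) by (simp add: sum.delta)
  also have "\<dots> = prefix_vf k l x"
    using pd_prefix_vf_bracket[OF assms] br by simp
  finally show ?thesis
    using br by simp
qed

text \<open>X_k agrees with prefix_vf k on the slice where the coordinates below slice_bound k
vanish. Along a bracket [X_a, X_b] this slice is contained in those of X_a and X_b, and
differentiating in a direction j \<ge> b does not leave it, while the components below b of
X_a and X_b vanish there anyway.\<close>

definition slice_bound :: "nat \<Rightarrow> nat" where
  "slice_bound k = (if k \<le> r then 1 else snd (br k))"

lemma slice_bound_le:
  assumes "r < k" "k \<le> n"
  shows "slice_bound (fst (br k)) \<le> snd (br k)" "slice_bound (snd (br k)) \<le> snd (br k)"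
proof -
  show "slice_bound (fst (br k)) \<le> snd (br k)"
    using br_bounds[OF assms] unfolding slice_bound_def by auto
  have "snd (br (snd (br k))) < snd (br k)" if "r < snd (br k)"
    using br_bounds[of "snd (br k)"] br_bounds[OF assms] that assms by auto
  then show "slice_bound (snd (br k)) \<le> snd (br k)"
    using br_bounds[OF assms] unfolding slice_bound_def by auto
qed

lemma hvf_eq_prefix_vf:
  "k \<in> {1..n} \<Longrightarrow> vanishes_below (slice_bound k) x \<Longrightarrow> X k l x = prefix_vf k l x"
proof (induction k arbitrary: l x rule: less_induct)
  case (less k)
  show ?case
  proof (cases "k \<le> r")
    case True
    then show ?thesis
      by (simp add: hvf_le_r gen_vf_eq_prefix_vf)
  next
    case False
    then have k: "r < k" "k \<le> n"
      using less.prems by auto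
    define a b where "a = fst (br k)" and "b = snd (br k)"
    have ab: "a \<in> {1..n}" "b \<in> {1..n}" "b < a" "a < k"
      using br_bounds[OF k] k(2) unfolding a_def b_def by auto
    have "X a l' y = prefix_vf a l' y" "X b l' y = prefix_vf b l' y"
      if "vanishes_below b y" for l' y
      using less.IH[OF ab(4) ab(1)] less.IH[of b] ab slice_bound_le[OF k] that
      unfolding a_def b_def by auto
    moreover have "vanishes_below b x"
      using less.prems(2) False unfolding slice_bound_def b_def by simp
    ultimately have "vf_bracket n (X a) (X b) l x = vf_bracket n (prefix_vf a) (prefix_vf b) l x"
      using prefix_vf_below[OF ab(1)] prefix_vf_below[OF ab(2)] ab(3)
      by (intro vf_bracket_cong_slice[of b]) auto
    then show ?thesis
      using hvf_bracket[OF k] vf_bracket_prefix_vf[OF k] \<open>vanishes_below b x\<close>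
      unfolding a_def b_def by simp
  qed
qed

lemma hvf_at_0:
  assumes "k \<in> {1..n}" "l \<in> {1..n}"
  shows "X k l (\<lambda>_. 0) = of_bool (k = l)"
  using hvf_eq_prefix_vf[OF assms(1)] prefix_vf_diag[OF assms(1)] prefix_vf_off_diag[OF assms(1)]
  by (cases "k = l") simp_all

lemma sconst_eq_unit:
  assumes m: "m \<in> {1..n}" and nested: "\<forall>l\<in>{1..n}. nested n r br i \<alpha> l = X m l"
  shows "sconst n r br i \<alpha> = (\<lambda>k. of_bool (k = m))"
  unfolding sconst_def
proof (rule the_equality)
  have "(\<Sum>k=1..n. of_bool (k = m) * X k l x) = X m l x" for l x
    using sum_of_bool_mult[OF m] .
  then show "(\<forall>k. k \<notin> {1..n} \<longrightarrow> of_bool (k = m) = (0::real)) \<and>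
      (\<forall>l\<in>{1..n}. \<forall>x. nested n r br i \<alpha> l x = (\<Sum>k=1..n. of_bool (k = m) * X k l x))"
    using m nested by auto
next
  fix c :: "nat \<Rightarrow> real"
  assume c: "(\<forall>k. k \<notin> {1..n} \<longrightarrow> c k = 0) \<and>
      (\<forall>l\<in>{1..n}. \<forall>x. nested n r br i \<alpha> l x = (\<Sum>k=1..n. c k * X k l x))"
  have "c l = of_bool (l = m)" for l
  proof (cases "l \<in> {1..n}")
    case True
    have "(\<Sum>k=1..n. c k * X k l (\<lambda>_. 0)) = (\<Sum>k=1..n. of_bool (k = l) * c k)"
      using hvf_at_0[OF _ True] by (intro sum.cong) auto
    then have "c l = nested n r br i \<alpha> l (\<lambda>_. 0)"
      using c True sum_of_bool_mult[OF True] by simp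
    also have "\<dots> = X m l (\<lambda>_. 0)"
      using nested True by simp
    finally show ?thesis
      using hvf_at_0[OF m True] by simp
  qed (use c m in auto)
  then show "c = (\<lambda>k. of_bool (k = m))"
    by (simp add: fun_eq_iff)
qed

lemma hvf_eq_fold_bracket:
  assumes "i \<in> {1..n}" "l \<in> {1..n}" "str l = str i @ zs"
  shows "X l = fold (\<lambda>j Z. vf_bracket n Z (X j)) zs (X i)"
  using assms(2,3)
proof (induction zs arbitrary: l rule: rev_induct)
  case Nil
  then show ?case
    using str_inj[of l i] assms(1) by simp
next
  case (snoc z zs)
  then have "r < l" "str (fst (br l)) = str i @ zs" "snd (br l) = z"
    using str_eq_snoc[of l "str i @ zs" z] str_nonempty[of i] by auto
  moreover have "fst (br l) \<in> {1..n}"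
    using br_bounds[of l] \<open>r < l\<close> snoc.prems by auto
  ultimately show ?case
    using snoc.IH hvf_bracket[of l] snoc.prems by simp
qed

lemma nested_suffix_count:
  assumes "i \<in> {1..n}" "l \<in> {1..n}" "str l = str i @ zs"
  shows "nested n r br i (count_list zs) = X l"
proof -
  have "set zs \<subseteq> set [1..<n+1]"
    using str_subset[OF assms(2)] assms(3) by auto
  then have "fold (\<lambda>j. (\<lambda>Z. vf_bracket n Z (X j)) ^^ count_list zs j) [1..<n+1]
      = fold (\<lambda>j Z. vf_bracket n Z (X j)) zs"
    by (rule fold_funpow_count_list[OF sorted_str_suffix[OF assms(2,3)] _ sorted_wrt_upt])
  then show ?thesis
    unfolding nested_def hvf_eq_fold_bracket[OF assms] by simp
qed

lemma ext_poly_at_suffix_count: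
  assumes "i \<in> {1..n}" "l \<in> {1..n}" "str l = str i @ zs"
  shows "ext_poly n r br i v (count_list zs) = signed_inv_fact n (count_list zs) * v l"
proof -
  have "count_list zs \<in> multi_idx n"
    using str_subset[OF assms(2)] assms(3) unfolding multi_idx_def by (auto simp: count_list_0_iff)
  moreover have "sconst n r br i (count_list zs) = (\<lambda>k. of_bool (k = l))"
    using nested_suffix_count[OF assms] by (intro sconst_eq_unit[OF assms(2)]) simp
  ultimately show ?thesis
    using assms(2) by (simp add: ext_poly_def signed_inv_fact_def)
qed

lemma ext_poly_nonzero:
  assumes "i \<in> {1..n}" "l \<in> {1..n}" "hprec r br i l" "v l \<noteq> 0"
  shows "ext_poly n r br i v \<noteq> (\<lambda>_. 0)"
proof -
  obtain zs where "str l = str i @ zs"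
    using assms(3) unfolding hprec_def by blast
  then have "ext_poly n r br i v (count_list zs) \<noteq> 0"
    using ext_poly_at_suffix_count[OF assms(1,2)] signed_inv_fact_nonzero assms(4) by simp
  then show ?thesis
    by auto
qed

lemma ext_poly_generators_eq_0_imp:
  assumes "\<forall>i\<in>{1..r}. ext_poly n r br i v = (\<lambda>_. 0)" "k \<in> {1..n}"
  shows "v k = 0"
proof (rule ccontr)
  assume "v k \<noteq> 0"
  define i where "i = hd (str k)"
  have i: "i \<in> {1..r}"
    using hd_str[OF assms(2)] unfolding i_def by simp
  then have "str k = str i @ tl (str k)"
    using str_le_r[of i] str_nonempty[of k] unfolding i_def by simp
  then have "hprec r br i k"
    unfolding hprec_def by blast
  then have "ext_poly n r br i v \<noteq> (\<lambda>_. 0)"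
    using ext_poly_nonzero i r_le_n assms(2) \<open>v k \<noteq> 0\<close> by auto
  then show False
    using assms(1) i by blast
qed

lemma poly_eval_ext_poly_at_0:
  assumes "i \<in> {1..n}"
  shows "poly_eval n (ext_poly n r br i v) (\<lambda>_. 0) = v i"
proof -
  have "count_list [] = (\<lambda>_::nat. 0)"
    by auto
  then show ?thesis
    using ext_poly_at_suffix_count[OF assms assms, of "[]"]
    by (simp add: poly_eval_at_0 signed_inv_fact_def)
qed

end

theorem proposition4p3:
  fixes r s n :: nat and br :: hall
  assumes "2 \<le> r" and "2 \<le> s" and "hall_basis r s n br"
  shows "(\<forall>i\<in>{1..n}. \<forall>l\<in>{1..n}. \<forall>v :: nat \<Rightarrow> real.
            hprec r br i l \<and> v l \<noteq> 0 \<longrightarrow> ext_poly n r br i v \<noteq> (\<lambda>_. 0))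
       \<and> (\<forall>v :: nat \<Rightarrow> real. (\<forall>i\<in>{1..r}. ext_poly n r br i v = (\<lambda>_. 0))
            \<longrightarrow> (\<forall>k\<in>{1..n}. v k = 0))
       \<and> (\<forall>i\<in>{1..n}. \<forall>v :: nat \<Rightarrow> real. poly_eval n (ext_poly n r br i v) (\<lambda>_. 0) = v i)"
proof -
  interpret Hall_Basis r s n br
    by (rule Hall_Basis.intro) fact
  show ?thesis
    using ext_poly_nonzero ext_poly_generators_eq_0_imp poly_eval_ext_poly_at_0 by blast
qed

end
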